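(* Let $n\ge5$, $m\in\mathbb N$, $p\in(0,1)$. Then $$\|\varrho_1\ast_1^0\varrho_1\|_2^2=\mathbb P\big(K_{1,4}\subseteq\overline{\mathcal G(n,m,p)}\big)=\big(1-p+p(1-p)^4\big)^m,$$ $$\|\varrho_2\ast_1^1\varrho_2\|_2^2=\big((1-p)^4+4p(1-p)^3+2p^2(1-p)^2\big)^m,$$ $$\|\varrho_2\ast_1^1\varrho_1\|_2^2=\big((1-p)^5+5p(1-p)^4+6p^2(1-p)^3+p^3(1-p)^2\big)^m,$$ $$\|\varrho_1\|_2^2=\big(1-2p^2+p^3\big)^m,$$ where $K_{1,4}$ is a star with four leaves on five fixed vertices of $\mathcal G(n,m,p)$ and $\overline{\mathcal G(n,m,p)}$ is the complement graph.
   Context: Random intersection graph $\mathcal G(n,m,p)$: vertices $v_1,\ldots,v_n$, attributes $a_1,\ldots,a_m$; each vertex chooses each attribute independently with probability $p$; two vertices are adjacent iff they chose a common attribute. $\mu_{m,p}(x)=p^{|x|}(1-p)^{m-|x|}$ on $\{0,1\}^m$. $g(x,y)=1$ if $x_i=y_i=1$ for some $i$, else $0$; $\varrho=\varrho_2=1-g$ and $\varrho_1(x)=\int\varrho(x,y)\,d\mu_{m,p}(y)$. Norms are $L^2$ with respect to products of $\mu_{m,p}$. Contraction: for $f$ on $(\{0,1\}^m)^k$, $h$ on $(\{0,1\}^m)^l$, $0\le a\le b\le k\wedge l$: $f\ast_b^ah(x_1,..,x_{b-a},y_1,..,y_{k-b},z_1,..,z_{l-b})=\int_{(\{0,1\}^m)^a}f(w,x,y)h(w,x,z)\,d\mu_{m,p}^{\otimes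 a}(w)$. *)

theory Defs
  imports Complex_Main "HOL-Library.FuncSet"
begin

text \<open>A point x of {0,1}^m is encoded as the set of attributes {i<m. x_i = 1},
  i.e. an element of Pow {..<m}.\<close>

definition cube :: "nat \<Rightarrow> nat set set" where
  "cube m = Pow {..<m}"

definition mu :: "nat \<Rightarrow> real \<Rightarrow> nat set \<Rightarrow> real" where
  "mu m p x = p ^ card x * (1 - p) ^ (m - card x)"

definition tuples :: "nat \<Rightarrow> nat \<Rightarrow> nat set list set" where
  "tuples m k = {xs. length xs = k \<and> set xs \<subseteq> cube m}"

definition integ :: "nat \<Rightarrow> real \<Rightarrow> nat \<Rightarrow> (nat set list \<Rightarrow> real) \<Rightarrow> real" where
  "integ m p k F = (\<Sum>xs\<in>tuples m k. F xs * prod_list (map (mu m p) xs))"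

definition norm2sq :: "nat \<Rightarrow> real \<Rightarrow> nat \<Rightarrow> (nat set list \<Rightarrow> real) \<Rightarrow> real" where
  "norm2sq m p k F = integ m p k (\<lambda>xs. (F xs)\<^sup>2)"

text \<open>Contraction f *_b^a h for f on ({0,1}^m)^k and h on ({0,1}^m)^l: its argument
  list is (x_1..x_{b-a}, y_1..y_{k-b}, z_1..z_{l-b}).\<close>

definition contr :: "nat \<Rightarrow> real \<Rightarrow> nat \<Rightarrow> nat \<Rightarrow> nat \<Rightarrow> nat \<Rightarrow>
    (nat set list \<Rightarrow> real) \<Rightarrow> (nat set list \<Rightarrow> real) \<Rightarrow> nat set list \<Rightarrow> real" where
  "contr m p k l a b f h args =
     (let x = take (b - a) args;
          y = take (k - b) (drop (b - a) args);
          z = drop ((b - a) + (k - b)) args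
      in integ m p a (\<lambda>w. f (w @ x @ y) * h (w @ x @ z)))"

definition g :: "nat set \<Rightarrow> nat set \<Rightarrow> real" where
  "g x y = (if x \<inter> y \<noteq> {} then 1 else 0)"

definition rho :: "nat set \<Rightarrow> nat set \<Rightarrow> real" where
  "rho x y = 1 - g x y"

definition rho1 :: "nat \<Rightarrow> real \<Rightarrow> nat set \<Rightarrow> real" where
  "rho1 m p x = (\<Sum>y\<in>cube m. rho x y * mu m p y)"

definition rho2L :: "nat set list \<Rightarrow> real" where
  "rho2L xs = rho (xs ! 0) (xs ! 1)"

definition rho1L :: "nat \<Rightarrow> real \<Rightarrow> nat set list \<Rightarrow> real" where
  "rho1L m p xs = rho1 m p (xs ! 0)"

text \<open>Random intersection graph G(n,m,p): a configuration X assigns to every vertex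
  i < n its attribute set X i; the configuration has probability
  prod_{i<n} mu(X i).\<close>

definition rig_adj :: "(nat \<Rightarrow> nat set) \<Rightarrow> nat \<Rightarrow> nat \<Rightarrow> bool" where
  "rig_adj X u v \<longleftrightarrow> u \<noteq> v \<and> X u \<inter> X v \<noteq> {}"

definition compl_adj :: "(nat \<Rightarrow> nat set) \<Rightarrow> nat \<Rightarrow> nat \<Rightarrow> bool" where
  "compl_adj X u v \<longleftrightarrow> u \<noteq> v \<and> \<not> rig_adj X u v"

definition rig_prob :: "nat \<Rightarrow> nat \<Rightarrow> real \<Rightarrow> ((nat \<Rightarrow> nat set) \<Rightarrow> bool) \<Rightarrow> real" where
  "rig_prob n m p E =
     (\<Sum>X\<in>PiE {..<n} (\<lambda>_. cube m). (if E X then 1 else 0) * (\<Prod>i<n. mu m p (X i)))"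

definition star_in_compl :: "nat \<Rightarrow> nat set \<Rightarrow> (nat \<Rightarrow> nat set) \<Rightarrow> bool" where
  "star_in_compl c L X \<longleftrightarrow> (\<forall>j\<in>L. compl_adj X c j)"

end

(* mu, rho, rho1 and the contractions are products over the m attributes of one-attribute
   factors, so each squared norm is the m-th power of a sum over {0,1} or {0,1}^2 of the
   one-attribute integrand.  For the star, condition on the attribute set x of the centre: the
   four leaves then independently avoid x, each with probability rho1(x), so the probability is
   the integral of rho1^4, which is the squared norm of rho1 *_1^0 rho1 = rho1^2. *)

theory Submission
  imports Defs
begin

lemma sum_Pow_prod_coords:
  fixes F :: "'a \<Rightarrow> bool \<Rightarrow> 'b::comm_semiring_1"
  assumes "finite A"
  shows "(\<Sum>x\<in>Pow A. \<Prod>i\<in>A. F i (i \<in> x)) = (\<Prod>i\<in>A. F i True + F i False)"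
proof -
  have "(\<Prod>i\<in>A. F i True + F i False)
      = (\<Sum>x\<in>Pow A. (\<Prod>i\<in>x. F i True) * (\<Prod>i\<in>A - x. F i False))"
    by (rule prod_add[OF assms])
  also have "\<dots> = (\<Sum>x\<in>Pow A. \<Prod>i\<in>A. F i (i \<in> x))"
  proof (rule sum.cong[OF refl])
    fix x assume "x \<in> Pow A"
    then have "(\<Prod>i\<in>A. F i (i \<in> x)) = (\<Prod>i\<in>x. F i (i \<in> x)) * (\<Prod>i\<in>A - x. F i (i \<in> x))"
      using assms by (metis Pow_iff inf.absorb_iff2 prod.Int_Diff)
    then show "(\<Prod>i\<in>x. F i True) * (\<Prod>i\<in>A - x. F i False) = (\<Prod>i\<in>A. F i (i \<in> x))"
      by simp
  qed
  finally show ?thesis by simp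
qed

lemma finite_cube [simp]: "finite (cube m)"
  by (simp add: cube_def)

lemma sum_cube_prod_coords:
  fixes F :: "nat \<Rightarrow> bool \<Rightarrow> 'a::comm_semiring_1"
  shows "(\<Sum>x\<in>cube m. \<Prod>i<m. F i (i \<in> x)) = (\<Prod>i<m. F i True + F i False)"
  unfolding cube_def by (rule sum_Pow_prod_coords) simp

lemma sum_cube_factorizing:
  fixes G :: "bool \<Rightarrow> 'a::comm_semiring_1"
  assumes "\<And>x. x \<in> cube m \<Longrightarrow> f x = (\<Prod>i<m. G (i \<in> x))"
  shows "(\<Sum>x\<in>cube m. f x) = (G True + G False) ^ m"
  using sum_cube_prod_coords[where F="\<lambda>_. G"] assms by simp

lemma sum_cube2_factorizing:
  fixes G :: "bool \<Rightarrow> bool \<Rightarrow> 'a::comm_semiring_1"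
  assumes "\<And>x y. x \<in> cube m \<Longrightarrow> y \<in> cube m \<Longrightarrow> f x y = (\<Prod>i<m. G (i \<in> x) (i \<in> y))"
  shows "(\<Sum>x\<in>cube m. \<Sum>y\<in>cube m. f x y)
       = (G True True + G True False + G False True + G False False) ^ m"
proof -
  have "(\<Sum>x\<in>cube m. \<Sum>y\<in>cube m. f x y)
      = (\<Sum>x\<in>cube m. \<Prod>i<m. G (i \<in> x) True + G (i \<in> x) False)"
    using assms by (simp add: sum_cube_prod_coords[where F = "\<lambda>i. G (i \<in> x)" for x])
  also have "\<dots> = (G True True + G True False + G False True + G False False) ^ m"
    by (subst sum_cube_factorizing[where G = "\<lambda>b. G b True + G b False"]) (simp_all add: add_ac)
  finally show ?thesis .
qed

lemma mu_eq_prod_coords: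
  assumes "x \<in> cube m"
  shows "mu m p x = (\<Prod>i<m. if i \<in> x then p else 1 - p)"
proof -
  have x: "x \<subseteq> {..<m}" "finite x"
    using assms finite_subset by (auto simp: cube_def)
  have "(\<Prod>i<m. if i \<in> x then p else 1 - p) = (\<Prod>i\<in>{..<m} \<inter> x. p) * (\<Prod>i\<in>{..<m} - x. 1 - p)"
    by (simp add: prod.If_cases Diff_eq)
  also have "{..<m} \<inter> x = x"
    using x by blast
  also have "(\<Prod>i\<in>x. p) * (\<Prod>i\<in>{..<m} - x. 1 - p) = p ^ card x * (1 - p) ^ (m - card x)"
    using x by (simp add: card_Diff_subset)
  finally show ?thesis
    by (simp add: mu_def)
qed

lemma rho_eq_prod_coords:
  assumes "x \<in> cube m"
  shows "rho x y = (\<Prod>i<m. if i \<in> x \<and> i \<in> y then 0 else 1)"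
  using assms by (auto simp: rho_def g_def cube_def prod_zero_iff intro!: prod.neutral)

lemma rho1_eq_prod_coords:
  assumes x: "x \<in> cube m"
  shows "rho1 m p x = (\<Prod>i<m. if i \<in> x then 1 - p else 1)"
proof -
  have "rho1 m p x = (\<Sum>y\<in>cube m. \<Prod>i<m.
      (if i \<in> x \<and> i \<in> y then 0 else 1) * (if i \<in> y then p else 1 - p))"
    unfolding rho1_def using x
    by (intro sum.cong refl) (simp add: rho_eq_prod_coords mu_eq_prod_coords prod.distrib)
  also have "\<dots> = (\<Prod>i<m. if i \<in> x then 1 - p else 1)"
    by (subst sum_cube_prod_coords[where F = "\<lambda>i b. (if i \<in> x \<and> b then 0 else 1)
        * (if b then p else 1 - p)"]) (auto intro!: prod.cong)
  finally show ?thesis .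
qed

lemma sum_mu: "(\<Sum>x\<in>cube m. mu m p x) = 1"
  using sum_cube_factorizing[where G = "\<lambda>b. if b then p else 1 - p"]
  by (simp add: mu_eq_prod_coords)

lemma rho1_moment:
  "(\<Sum>x\<in>cube m. rho1 m p x ^ k * mu m p x) = (1 - p + p * (1 - p) ^ k) ^ m"
proof -
  define G where "G b = (if b then (1 - p) ^ k * p else 1 - p)" for b
  have "(\<Sum>x\<in>cube m. rho1 m p x ^ k * mu m p x) = (G True + G False) ^ m"
  proof (rule sum_cube_factorizing)
    fix x assume x: "x \<in> cube m"
    show "rho1 m p x ^ k * mu m p x = (\<Prod>i<m. G (i \<in> x))"
      unfolding rho1_eq_prod_coords[OF x] mu_eq_prod_coords[OF x]
      by (auto simp: G_def prod_power_distrib simp flip: prod.distrib intro!: prod.cong)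
  qed
  also have "G True + G False = 1 - p + p * (1 - p) ^ k"
    by (simp add: G_def)
  finally show ?thesis .
qed

lemma integ_0: "integ m p 0 F = F []"
proof -
  have "tuples m 0 = {[]}"
    by (auto simp: tuples_def)
  then show ?thesis
    by (simp add: integ_def)
qed

lemma integ_1: "integ m p 1 F = (\<Sum>x\<in>cube m. F [x] * mu m p x)"
proof -
  have "tuples m 1 = (\<lambda>x. [x]) ` cube m"
    by (auto simp: tuples_def length_Suc_conv)
  then show ?thesis
    unfolding integ_def by (simp add: sum.reindex inj_on_def)
qed

lemma integ_2: "integ m p 2 F = (\<Sum>x\<in>cube m. \<Sum>y\<in>cube m. F [x, y] * (mu m p x * mu m p y))"
proof -
  have "tuples m 2 = (\<lambda>(x, y). [x, y]) ` (cube m \<times> cube m)"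
    by (auto simp: tuples_def length_Suc_conv numeral_2_eq_2)
  moreover have "inj_on (\<lambda>(x, y). [x, y]) (cube m \<times> cube m)"
    by (auto simp: inj_on_def)
  ultimately show ?thesis
    unfolding integ_def by (simp add: sum.reindex sum.cartesian_product split_def)
qed

lemma contr_rho1_rho1: "contr m p 1 1 0 1 (rho1L m p) (rho1L m p) [x] = rho1 m p x ^ 2"
  by (simp add: contr_def integ_0 rho1L_def power2_eq_square)

lemma rho_Un: "rho (y \<union> z) w = rho w y * rho w z"
  by (auto simp: rho_def g_def)

lemma contr_rho2_rho2: "contr m p 2 2 1 1 rho2L rho2L [y, z] = rho1 m p (y \<union> z)"
  unfolding contr_def Let_def integ_1 by (simp add: rho2L_def rho1_def rho_Un)

lemma contr_rho2_rho1_eq_prod_coords: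
  assumes y: "y \<in> cube m"
  shows "contr m p 2 1 1 1 rho2L (rho1L m p) [y] = (\<Prod>i<m. if i \<in> y then 1 - p else 1 - p\<^sup>2)"
proof -
  have "contr m p 2 1 1 1 rho2L (rho1L m p) [y] = (\<Sum>w\<in>cube m. \<Prod>i<m.
      (if i \<in> w \<and> i \<in> y then 0 else 1) * (if i \<in> w then 1 - p else 1) * (if i \<in> w then p else 1 - p))"
    unfolding contr_def Let_def integ_1
    by (intro sum.cong refl)
      (simp add: rho2L_def rho1L_def rho_eq_prod_coords rho1_eq_prod_coords mu_eq_prod_coords prod.distrib)
  also have "\<dots> = (\<Prod>i<m. if i \<in> y then 1 - p else 1 - p\<^sup>2)"
    by (subst sum_cube_prod_coords[where F = "\<lambda>i b. (if b \<and> i \<in> y then 0 else 1)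
        * (if b then 1 - p else 1) * (if b then p else 1 - p)"])
      (auto simp: power2_eq_square algebra_simps intro!: prod.cong)
  finally show ?thesis .
qed

lemma norm2sq_rho1L: "norm2sq m p 1 (rho1L m p) = (1 - 2 * p\<^sup>2 + p ^ 3) ^ m"
proof -
  have "norm2sq m p 1 (rho1L m p) = (1 - p + p * (1 - p)\<^sup>2) ^ m"
    unfolding norm2sq_def integ_1 by (simp add: rho1L_def rho1_moment)
  also have "1 - p + p * (1 - p)\<^sup>2 = 1 - 2 * p\<^sup>2 + p ^ 3"
    by algebra
  finally show ?thesis .
qed

lemma norm2sq_contr_rho1_rho1:
  "norm2sq m p 1 (contr m p 1 1 0 1 (rho1L m p) (rho1L m p)) = (1 - p + p * (1 - p) ^ 4) ^ m"
  unfolding norm2sq_def integ_1 contr_rho1_rho1 by (simp flip: power_mult rho1_moment)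

lemma norm2sq_contr_rho2_rho2:
  "norm2sq m p 2 (contr m p 2 2 1 1 rho2L rho2L)
     = ((1 - p) ^ 4 + 4 * p * (1 - p) ^ 3 + 2 * p\<^sup>2 * (1 - p)\<^sup>2) ^ m"
proof -
  define G where "G a b = (if a \<or> b then (1 - p)\<^sup>2 else 1)
    * (if a then p else 1 - p) * (if b then p else 1 - p)" for a b
  have "norm2sq m p 2 (contr m p 2 2 1 1 rho2L rho2L)
      = (G True True + G True False + G False True + G False False) ^ m"
    unfolding norm2sq_def integ_2 contr_rho2_rho2
  proof (rule sum_cube2_factorizing)
    fix y z assume "y \<in> cube m" "z \<in> cube m"
    moreover from this have "y \<union> z \<in> cube m"
      by (simp add: cube_def)
    ultimately show "(rho1 m p (y \<union> z))\<^sup>2 * (mu m p y * mu m p z) = (\<Prod>i<m. G (i \<in> y) (i \<in> z))"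
      by (auto simp: G_def rho1_eq_prod_coords mu_eq_prod_coords prod_power_distrib
          simp flip: prod.distrib intro!: prod.cong)
  qed
  also have "G True True + G True False + G False True + G False False
      = (1 - p) ^ 4 + 4 * p * (1 - p) ^ 3 + 2 * p\<^sup>2 * (1 - p)\<^sup>2"
    unfolding G_def by simp algebra
  finally show ?thesis .
qed

lemma norm2sq_contr_rho2_rho1:
  "norm2sq m p 1 (contr m p 2 1 1 1 rho2L (rho1L m p))
     = ((1 - p) ^ 5 + 5 * p * (1 - p) ^ 4 + 6 * p\<^sup>2 * (1 - p) ^ 3 + p ^ 3 * (1 - p)\<^sup>2) ^ m"
proof -
  define G where "G b = (if b then 1 - p else 1 - p\<^sup>2)\<^sup>2 * (if b then p else 1 - p)" for b
  have "norm2sq m p 1 (contr m p 2 1 1 1 rho2L (rho1L m p)) = (G True + G False) ^ m"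
    unfolding norm2sq_def integ_1
  proof (rule sum_cube_factorizing)
    fix y assume y: "y \<in> cube m"
    show "(contr m p 2 1 1 1 rho2L (rho1L m p) [y])\<^sup>2 * mu m p y = (\<Prod>i<m. G (i \<in> y))"
      unfolding contr_rho2_rho1_eq_prod_coords[OF y] mu_eq_prod_coords[OF y]
      by (auto simp: G_def prod_power_distrib simp flip: prod.distrib intro!: prod.cong)
  qed
  also have "G True + G False
      = (1 - p) ^ 5 + 5 * p * (1 - p) ^ 4 + 6 * p\<^sup>2 * (1 - p) ^ 3 + p ^ 3 * (1 - p)\<^sup>2"
    unfolding G_def by simp algebra
  finally show ?thesis .
qed

lemma sum_PiE_condition_on_coord:
  fixes K :: "'b \<Rightarrow> 'a \<Rightarrow> 'b \<Rightarrow> 'c::comm_semiring_1"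
  assumes I: "finite I" "c \<in> I" and S: "finite S"
  shows "(\<Sum>X\<in>PiE I (\<lambda>_. S). \<Prod>i\<in>I. K (X c) i (X i))
       = (\<Sum>x\<in>S. K x c x * (\<Prod>i\<in>I - {c}. \<Sum>y\<in>S. K x i y))"
proof -
  \<comment> \<open>Fixing the value at c to x by a point mass turns the summand into a product of
    factors that each depend on one coordinate only.\<close>
  define K' where "K' x i y = (if i = c then if y = x then K x c y else 0 else K x i y)" for x i y
  have cond: "(\<Prod>i\<in>I. K (X c) i (X i)) = (\<Sum>x\<in>S. \<Prod>i\<in>I. K' x i (X i))"
    if "X c \<in> S" for X
  proof -
    have "(\<Sum>x\<in>S. \<Prod>i\<in>I. K' x i (X i))
        = (\<Sum>x\<in>S. if X c = x then K x c (X c) * (\<Prod>i\<in>I - {c}. K x i (X i)) else 0)"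
      using I by (intro sum.cong refl) (simp add: prod.remove K'_def)
    also have "\<dots> = (\<Prod>i\<in>I. K (X c) i (X i))"
      using I S that by (simp add: prod.remove sum.delta')
    finally show ?thesis ..
  qed
  have "(\<Sum>X\<in>PiE I (\<lambda>_. S). \<Prod>i\<in>I. K (X c) i (X i))
      = (\<Sum>x\<in>S. \<Sum>X\<in>PiE I (\<lambda>_. S). \<Prod>i\<in>I. K' x i (X i))"
    using I by (subst sum.swap) (intro sum.cong refl cond, auto)
  also have "\<dots> = (\<Sum>x\<in>S. \<Prod>i\<in>I. \<Sum>y\<in>S. K' x i y)"
    using I S by (simp add: prod_sum_PiE)
  also have "\<dots> = (\<Sum>x\<in>S. K x c x * (\<Prod>i\<in>I - {c}. \<Sum>y\<in>S. K x i y))"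
    using I S by (intro sum.cong refl) (simp add: prod.remove K'_def)
  finally show ?thesis .
qed

lemma prod_if_mem_subset:
  fixes g :: "'a \<Rightarrow> 'b::comm_monoid_mult"
  assumes "finite A" "L \<subseteq> A"
  shows "(\<Prod>i\<in>A. if i \<in> L then g i else 1) = (\<Prod>i\<in>L. g i)"
  using assms by (simp add: prod.inter_restrict[symmetric] Int_absorb1)

lemma star_in_compl_indicator:
  assumes "c \<notin> L" "finite L"
  shows "(if star_in_compl c L X then 1 else 0) = (\<Prod>j\<in>L. rho (X c) (X j))"
  using assms
  by (auto simp: star_in_compl_def compl_adj_def rig_adj_def rho_def g_def prod_zero_iff
      intro!: prod.neutral)

lemma rig_prob_star_in_compl:
  assumes "c < n" "L \<subseteq> {..<n}" "c \<notin> L"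
  shows "rig_prob n m p (star_in_compl c L) = (1 - p + p * (1 - p) ^ card L) ^ m"
proof -
  define K where "K x i y = (if i \<in> L then rho x y else 1) * mu m p y" for x i y
  have L: "finite L" "L \<subseteq> {..<n} - {c}"
    using assms finite_subset by auto
  have "rig_prob n m p (star_in_compl c L) = (\<Sum>X\<in>PiE {..<n} (\<lambda>_. cube m). \<Prod>i<n. K (X c) i (X i))"
    unfolding rig_prob_def K_def prod.distrib
    using assms L by (simp add: star_in_compl_indicator prod_if_mem_subset)
  also have "\<dots> = (\<Sum>x\<in>cube m. K x c x * (\<Prod>i\<in>{..<n} - {c}. \<Sum>y\<in>cube m. K x i y))"
    using assms by (simp add: sum_PiE_condition_on_coord)
  also have "\<dots> = (\<Sum>x\<in>cube m. rho1 m p x ^ card L * mu m p x)"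
  proof -
    have "(\<Sum>y\<in>cube m. K x i y) = (if i \<in> L then rho1 m p x else 1)" for x i
      by (simp add: K_def rho1_def sum_mu)
    then show ?thesis
      using assms L by (simp add: prod_if_mem_subset K_def mult.commute)
  qed
  also have "\<dots> = (1 - p + p * (1 - p) ^ card L) ^ m"
    by (rule rho1_moment)
  finally show ?thesis .
qed

theorem lemma7p3:
  fixes n m :: nat and p :: real and c :: nat and L :: "nat set"
  assumes "n \<ge> 5" and "0 < p" and "p < 1"
    and "c < n" and "L \<subseteq> {..<n}" and "card L = 4" and "c \<notin> L"
  shows "norm2sq m p 1 (contr m p 1 1 0 1 (rho1L m p) (rho1L m p))
           = rig_prob n m p (star_in_compl c L)
       \<and> rig_prob n m p (star_in_compl c L) = (1 - p + p * (1 - p) ^ 4) ^ m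
       \<and> norm2sq m p 2 (contr m p 2 2 1 1 rho2L rho2L)
           = ((1 - p) ^ 4 + 4 * p * (1 - p) ^ 3 + 2 * p\<^sup>2 * (1 - p)\<^sup>2) ^ m
       \<and> norm2sq m p 1 (contr m p 2 1 1 1 rho2L (rho1L m p))
           = ((1 - p) ^ 5 + 5 * p * (1 - p) ^ 4 + 6 * p\<^sup>2 * (1 - p) ^ 3
              + p ^ 3 * (1 - p)\<^sup>2) ^ m
       \<and> norm2sq m p 1 (rho1L m p) = (1 - 2 * p\<^sup>2 + p ^ 3) ^ m"
proof -
  have star: "rig_prob n m p (star_in_compl c L) = (1 - p + p * (1 - p) ^ 4) ^ m"
    using rig_prob_star_in_compl[OF assms(4,5,7)] assms(6) by simp
  show ?thesis
    using star norm2sq_contr_rho1_rho1 norm2sq_contr_rho2_rho2 norm2sq_contr_rho2_rho1 norm2sq_rho1L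
    by simp
qed

end
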